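(* Let $A\in M_n$ be normal and $c\in\mathbb{R}^n$. Then $W(A;c)$ is the intersection of finitely many closed half-planes of $\mathbb{C}$ and is bounded; i.e. $W(A;c)$ is a convex polygon (possibly empty, a single point, or a line segment).
   Context: $M_n$ denotes the space of $n\times n$ complex matrices. For $A\in M_n$ and $\theta\in\mathbb{R}$, put $H_\theta(A)=\frac{1}{2}(e^{i\theta}A+e^{-i\theta}A^* )$, a Hermitian matrix. For a Hermitian $H\in M_n$, $\lambda_1(H)\ge\lambda_2(H)\ge\cdots\ge\lambda_n(H)$ denote its eigenvalues in nonincreasing order, counted with multiplicity. For $c=(c_1,\dots,c_n)^t\in\mathbb{R}^n$ the weighted numerical range of $A$ is $$W(A;c)=\bigcap_{\theta\in[0,2\pi)}\Big\{v\in\mathbb{C}:\ \mathrm{Re}(e^{i\theta}v)\le \sum_{j=1}^n c_j\lambda_j(H_\theta(A))\Big\}.$$ *)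

theory Defs
  imports "HOL-Analysis.Analysis"
    "Jordan_Normal_Form.Schur_Decomposition"
    "Jordan_Normal_Form.Char_Poly"
    "HOL-Computational_Algebra.Fundamental_Theorem_Algebra"
begin

definition normal_mat :: "complex mat \<Rightarrow> bool" where
  "normal_mat A \<longleftrightarrow> A * mat_adjoint A = mat_adjoint A * A"

definition H_theta :: "real \<Rightarrow> complex mat \<Rightarrow> complex mat" where
  "H_theta \<theta> A = (1/2 :: complex) \<cdot>\<^sub>m
     (exp (\<i> * of_real \<theta>) \<cdot>\<^sub>m A + exp (- (\<i> * of_real \<theta>)) \<cdot>\<^sub>m mat_adjoint A)"

text \<open>For a Hermitian matrix all
  roots are real, so taking real parts loses nothing. Indexing is 0-based:
  herm_eig H j is lambda_{j+1}(H).\<close>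
definition herm_eigs :: "complex mat \<Rightarrow> real list" where
  "herm_eigs H = rev (sorted_list_of_multiset (image_mset Re (proots (char_poly H))))"

definition herm_eig :: "complex mat \<Rightarrow> nat \<Rightarrow> real" where
  "herm_eig H j = herm_eigs H ! j"

text \<open>Weighted numerical range W(A;c); the weight vector c is c_1..c_n stored as c 0 .. c (n-1).\<close>
definition weighted_nr :: "nat \<Rightarrow> complex mat \<Rightarrow> (nat \<Rightarrow> real) \<Rightarrow> complex set" where
  "weighted_nr n A c = (\<Inter>\<theta>\<in>{0..<2*pi}.
     {v. Re (exp (\<i> * of_real \<theta>) * v) \<le> (\<Sum>j<n. c j * herm_eig (H_theta \<theta> A) j)})"

definition closed_halfplane :: "complex \<Rightarrow> real \<Rightarrow> complex set" where
  "closed_halfplane a b = {v. Re (cnj a * v) \<le> b}"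

end

theory Submission
  imports Defs
begin

text \<open>A normal matrix is unitarily diagonalizable, so \<open>H_theta \<theta> A\<close> has the eigenvalues
  \<open>Re (cis \<theta> * \<lambda>\<^sub>k)\<close>, and the bound defining \<open>W(A;c)\<close> at the angle \<open>\<theta>\<close> is \<open>g \<theta> = \<Sum>\<^sub>j c\<^sub>j x\<^sub>j \<theta>\<close>
  with \<open>x\<^sub>1 \<theta> \<ge> x\<^sub>2 \<theta> \<ge> \<dots>\<close> these numbers in decreasing order. Two distinct \<open>Re (cis \<theta> * \<lambda>\<^sub>k)\<close>
  coincide for only finitely many \<open>\<theta>\<close> in \<open>[0, 2\<pi>)\<close>; between consecutive such angles the order is
  fixed, so there \<open>g \<theta> = Re (cis \<theta> * p)\<close> for a single point \<open>p\<close>. Once the angles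
  \<open>0, \<pi>/2, \<pi>, 3\<pi>/2\<close> are added, these arcs are shorter than \<open>\<pi>\<close>, so \<open>cis \<theta>\<close> is a nonnegative
  combination of the directions at the ends of its arc and the constraint at \<open>\<theta>\<close> follows from the
  two constraints there. Hence finitely many half-planes cut out \<open>W(A;c)\<close>, and the four axis
  directions already bound it.\<close>

section \<open>Unitary diagonalization of normal matrices\<close>

lemma mat_adjoint_dim [simp]:
  "dim_row (mat_adjoint A) = dim_col A" "dim_col (mat_adjoint A) = dim_row A"
  unfolding mat_adjoint_def by auto

lemma mat_adjoint_index [simp]:
  "i < dim_col A \<Longrightarrow> j < dim_row A \<Longrightarrow> mat_adjoint A $$ (i, j) = conjugate (A $$ (j, i))"
  unfolding mat_adjoint_def by (auto simp: mat_of_rows_def)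

lemma mat_adjoint_carrier [simp]: "A \<in> carrier_mat n m \<Longrightarrow> mat_adjoint A \<in> carrier_mat m n"
  by auto

lemma mat_adjoint_adjoint [simp]: "mat_adjoint (mat_adjoint (A :: complex mat)) = A"
  by (rule eq_matI) auto

lemma mat_adjoint_mult:
  fixes A B :: "complex mat"
  assumes "A \<in> carrier_mat n m" "B \<in> carrier_mat m k"
  shows "mat_adjoint (A * B) = mat_adjoint B * mat_adjoint A"
proof (rule eq_matI)
  fix i j assume "i < dim_row (mat_adjoint B * mat_adjoint A)" "j < dim_col (mat_adjoint B * mat_adjoint A)"
  with assms show "mat_adjoint (A * B) $$ (i, j) = (mat_adjoint B * mat_adjoint A) $$ (i, j)"
    by (auto simp: scalar_prod_def sum_conjugate mult.commute)
qed (use assms in auto)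

lemma mat_adjoint_one [simp]: "mat_adjoint (1\<^sub>m n :: complex mat) = 1\<^sub>m n"
  by (rule eq_matI) auto

lemma mat_adjoint_four_block_diag:
  assumes "P \<in> carrier_mat m m"
  shows "mat_adjoint (four_block_mat (1\<^sub>m 1) (0\<^sub>m 1 m) (0\<^sub>m m 1) (P :: complex mat))
       = four_block_mat (1\<^sub>m 1) (0\<^sub>m 1 m) (0\<^sub>m m 1) (mat_adjoint P)"
  by (rule eq_matI) (use assms in auto)

definition vec_normalize :: "complex vec \<Rightarrow> complex vec" where
  "vec_normalize w = complex_of_real (1 / sqrt (Re (w \<bullet>c w))) \<cdot>\<^sub>v w"

lemma vec_normalize_carrier [simp]: "w \<in> carrier_vec n \<Longrightarrow> vec_normalize w \<in> carrier_vec n"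
  unfolding vec_normalize_def by auto

lemma cscalar_prod_self_real: "(w :: complex vec) \<bullet>c w = complex_of_real (Re (w \<bullet>c w))"
  using conjugate_square_ge_0_vec[of w] by (auto simp: less_eq_complex_def complex_eq_iff)

lemma Re_cscalar_prod_self_pos:
  assumes "(w :: complex vec) \<in> carrier_vec n" "w \<noteq> 0\<^sub>v n"
  shows "Re (w \<bullet>c w) > 0"
  using conjugate_square_greater_0_vec[OF assms(1)] assms(2) by (auto simp: less_complex_def)

lemma corthogonal_nonzero:
  assumes "corthogonal ws" "w \<in> set ws"
  shows "w \<noteq> 0\<^sub>v n"
proof
  assume "w = 0\<^sub>v n"
  obtain i where i: "i < length ws" "ws ! i = w" using assms(2) by (auto simp: in_set_conv_nth)
  have "ws ! i \<bullet>c ws ! i \<noteq> 0" using corthogonalD[OF assms(1) i(1) i(1)] by simp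
  then show False using i(2) \<open>w = 0\<^sub>v n\<close> by simp
qed

lemma cscalar_prod_vec_normalize:
  assumes "u \<in> carrier_vec n" "w \<in> carrier_vec n"
  shows "vec_normalize u \<bullet>c vec_normalize w
       = complex_of_real (1 / (sqrt (Re (u \<bullet>c u)) * sqrt (Re (w \<bullet>c w)))) * (u \<bullet>c w)"
  using assms unfolding vec_normalize_def by (simp add: conjugate_smult_vec)

lemma vec_normalize_unit:
  assumes "w \<in> carrier_vec n" "w \<noteq> 0\<^sub>v n"
  shows "vec_normalize w \<bullet>c vec_normalize w = 1"
proof -
  define r where "r = Re (w \<bullet>c w)"
  have "r > 0" unfolding r_def by (rule Re_cscalar_prod_self_pos[OF assms])
  moreover have "vec_normalize w \<bullet>c vec_normalize w = complex_of_real (1 / (sqrt r * sqrt r) * r)"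
    using cscalar_prod_vec_normalize[OF assms(1) assms(1)] cscalar_prod_self_real[of w]
    by (simp add: r_def)
  ultimately show ?thesis by simp
qed

lemma corthogonal_map_vec_normalize:
  assumes "corthogonal ws" "set ws \<subseteq> carrier_vec n"
  shows "corthogonal (map vec_normalize ws)"
proof (intro corthogonalI)
  fix i j assume i: "i < length (map vec_normalize ws)" and j: "j < length (map vec_normalize ws)"
  have pos: "Re (ws ! k \<bullet>c ws ! k) > 0" if "k < length ws" for k
    using that assms corthogonal_nonzero[OF assms(1)] by (intro Re_cscalar_prod_self_pos) auto
  have "vec_normalize (ws ! i) \<bullet>c vec_normalize (ws ! j)
        = complex_of_real (1 / (sqrt (Re (ws ! i \<bullet>c ws ! i)) * sqrt (Re (ws ! j \<bullet>c ws ! j))))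
          * (ws ! i \<bullet>c ws ! j)"
    using assms(2) i j by (intro cscalar_prod_vec_normalize) auto
  then show "(map vec_normalize ws ! i \<bullet>c map vec_normalize ws ! j = 0) = (i \<noteq> j)"
    using pos[of i] pos[of j] corthogonalD[OF assms(1)] i j by auto
qed

lemma orthonormal_basis_completion:
  assumes v: "v \<in> carrier_vec n" "v \<noteq> 0\<^sub>v n"
  obtains ws where "set ws \<subseteq> carrier_vec n" "corthogonal ws" "length ws = n"
    "hd ws = vec_normalize v" "\<And>w. w \<in> set ws \<Longrightarrow> w \<bullet>c w = 1"
proof
  interpret cof_vec_space n "TYPE(complex)" .
  define b where "b = basis_completion v"
  have b: "set b \<subseteq> carrier_vec n" "distinct b" "\<not> lin_dep (set b)" "length b = n" "hd b = v"
    using basis_completion[OF v] unfolding b_def by auto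
  have "n \<noteq> 0" using v by (auto intro: eq_vecI)
  with b obtain vs where bv: "b = v # vs" by (cases b) auto
  define ws0 where "ws0 = gram_schmidt n b"
  have ws0: "set ws0 \<subseteq> carrier_vec n" "corthogonal ws0" "length ws0 = n" "hd ws0 = v"
    using gram_schmidt_result[OF b(1-3) refl] gram_schmidt_hd[OF v(1), of vs] b(4)
    unfolding ws0_def bv by auto
  show "set (map vec_normalize ws0) \<subseteq> carrier_vec n" "length (map vec_normalize ws0) = n"
    "corthogonal (map vec_normalize ws0)"
    using ws0 corthogonal_map_vec_normalize[OF ws0(2,1)] by auto
  show "hd (map vec_normalize ws0) = vec_normalize v"
    using ws0 \<open>n \<noteq> 0\<close> by (cases ws0) auto
  show "w \<bullet>c w = 1" if "w \<in> set (map vec_normalize ws0)" for w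
    using that ws0(1) corthogonal_nonzero[OF ws0(2)] vec_normalize_unit by auto
qed

lemma orthonormal_mat_of_cols:
  assumes ws: "set ws \<subseteq> carrier_vec n" "corthogonal ws" "length ws = n"
    and unit: "\<And>w. w \<in> set ws \<Longrightarrow> w \<bullet>c w = 1"
  shows "corthogonal_inv (mat_of_cols n ws) = mat_adjoint (mat_of_cols n ws)"
    "mat_adjoint (mat_of_cols n ws) * mat_of_cols n ws = 1\<^sub>m n"
    "mat_of_cols n ws * mat_adjoint (mat_of_cols n ws) = 1\<^sub>m n"
proof -
  have "map vec_inv ws = map conjugate ws"
    using unit by (auto simp: vec_inv_def)
  then show adj: "corthogonal_inv (mat_of_cols n ws) = mat_adjoint (mat_of_cols n ws)"
    unfolding corthogonal_inv_def mat_adjoint_def cols_mat_of_cols[OF ws(1)] by (rule arg_cong)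
  have "inverts_mat (mat_adjoint (mat_of_cols n ws)) (mat_of_cols n ws)"
    using corthogonal_inv_result[OF orthogonal_mat_of_cols[OF ws]] unfolding adj .
  moreover have "mat_of_cols n ws \<in> carrier_mat n n" using ws(3) by (simp add: carrier_matI)
  ultimately show "mat_adjoint (mat_of_cols n ws) * mat_of_cols n ws = 1\<^sub>m n"
    "mat_of_cols n ws * mat_adjoint (mat_of_cols n ws) = 1\<^sub>m n"
    using mat_mult_left_right_inverse[of "mat_adjoint (mat_of_cols n ws)" n] ws(3)
    unfolding inverts_mat_def by auto
qed

text \<open>An orthonormal basis starting with a unit eigenvector for \<open>e\<close> moves \<open>e\<close> to the top left
  corner and clears the rest of the first column.\<close>

lemma unitary_deflation:
  fixes A :: "complex mat"
  assumes A: "A \<in> carrier_mat n n" and e: "eigenvalue A e"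
  obtains W A2 A3 where
    "similar_mat_wit A (four_block_mat (mat 1 1 (\<lambda>_. e)) A2 (0\<^sub>m (n - 1) 1) A3) W (mat_adjoint W)"
    "A2 \<in> carrier_mat 1 (n - 1)" "A3 \<in> carrier_mat (n - 1) (n - 1)"
proof -
  define v where "v = find_eigenvector A e"
  have v: "v \<in> carrier_vec n" "v \<noteq> 0\<^sub>v n" and Av: "A *\<^sub>v v = e \<cdot>\<^sub>v v"
    using find_eigenvector[OF A e] A unfolding v_def eigenvector_def by auto
  have n: "n \<noteq> 0" using v by (auto intro: eq_vecI)
  define u where "u = vec_normalize v"
  have u: "u \<in> carrier_vec n" "u \<noteq> 0\<^sub>v n" "A *\<^sub>v u = e \<cdot>\<^sub>v u"
    using v vec_normalize_unit[OF v] unfolding u_def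
    by (auto simp: vec_normalize_def mult_mat_vec[OF A v(1)] Av smult_smult_assoc mult.commute)
  obtain ws where ws: "set ws \<subseteq> carrier_vec n" "corthogonal ws" "length ws = n" "hd ws = u"
    and unit: "\<And>w. w \<in> set ws \<Longrightarrow> w \<bullet>c w = 1"
    using orthonormal_basis_completion[OF v] unfolding u_def by metis
  define W where "W = mat_of_cols n ws"
  have W: "W \<in> carrier_mat n n" unfolding W_def using ws(3) by (simp add: carrier_matI)
  have W_adj: "corthogonal_inv W = mat_adjoint W" "mat_adjoint W * W = 1\<^sub>m n" "W * mat_adjoint W = 1\<^sub>m n"
    unfolding W_def by (simp_all only: orthonormal_mat_of_cols[OF ws(1-3) unit])
  define A' where "A' = mat_adjoint W * A * W"
  have A': "A' \<in> carrier_mat n n" unfolding A'_def using A W by auto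
  have sim: "similar_mat_wit A A' W (mat_adjoint W)"
    using similar_mat_wit_sym[of A' A "mat_adjoint W" W] similar_mat_witI[of "mat_adjoint W" W n A' A]
      A A' W W_adj(2,3)
    unfolding A'_def by auto
  have "col (corthogonal_inv W * A * W) 0 = vec n (\<lambda>i. if i = 0 then e else 0)"
    using corthogonal_col_ev_0[OF A u n ws(4,1-3)] unfolding W_def .
  then have col0: "col A' 0 = vec n (\<lambda>i. if i = 0 then e else 0)"
    unfolding A'_def W_adj(1)[symmetric] .
  obtain A1 A2 A0 A3 where split: "split_block A' 1 1 = (A1, A2, A0, A3)"
    by (cases "split_block A' 1 1") auto
  have dims: "dim_row A' = 1 + (n - 1)" "dim_col A' = 1 + (n - 1)" using A' n by auto
  note blocks = split_block[OF split dims]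
  have "A1 = mat 1 1 (\<lambda>_. e)" "A0 = 0\<^sub>m (n - 1) 1"
    using split[unfolded split_block_def Let_def] col0 A' n
    by (auto simp: col_def vec_eq_iff)
  with sim blocks show thesis by (intro that) auto
qed

theorem unitary_schur_decomposition:
  fixes A :: "complex mat"
  assumes "A \<in> carrier_mat n n" "char_poly A = (\<Prod>e \<leftarrow> es. [:- e, 1:])"
  shows "\<exists>B P. similar_mat_wit A B P (mat_adjoint P) \<and> upper_triangular B"
  using assms
proof (induction es arbitrary: n A)
  case Nil
  then have "n = 0" using degree_monic_char_poly[of A n] by simp
  with Nil show ?case
    by (intro exI[of _ A] exI[of _ "1\<^sub>m n"]) (auto intro: similar_mat_wit_refl)
next
  case (Cons e es)
  note A = Cons.prems(1)
  have "eigenvalue A e"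
    unfolding eigenvalue_root_char_poly[OF A] Cons.prems(2) by simp
  then obtain W A2 A3 where
    sim: "similar_mat_wit A (four_block_mat (mat 1 1 (\<lambda>_. e)) A2 (0\<^sub>m (n - 1) 1) A3) W (mat_adjoint W)"
    and A2: "A2 \<in> carrier_mat 1 (n - 1)" and A3: "A3 \<in> carrier_mat (n - 1) (n - 1)"
    using unitary_deflation[OF A] by blast
  have E: "mat 1 1 (\<lambda>_. e) \<in> carrier_mat 1 1" by simp
  have "[:- e, 1:] * (\<Prod>e \<leftarrow> es. [:- e, 1:]) = char_poly A"
    using Cons.prems(2) by simp
  also have "\<dots> = char_poly (mat 1 1 (\<lambda>_. e)) * char_poly A3"
    using char_poly_similar[of A] sim char_poly_four_block_zeros_col[OF E A2 A3]
    unfolding similar_mat_def by metis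
  also have "char_poly (mat 1 1 (\<lambda>_. e)) = [:- e, 1:]"
    by (simp add: char_poly_defs det_def sign_def)
  finally have "char_poly A3 = (\<Prod>e \<leftarrow> es. [:- e, 1:])"
    by (metis mult_cancel_left pCons_eq_0_iff zero_neq_one)
  then obtain B P where simB: "similar_mat_wit A3 B P (mat_adjoint P)" and B: "upper_triangular B"
    using Cons.IH[OF A3] by blast
  have P: "P \<in> carrier_mat (n - 1) (n - 1)" and Bc: "B \<in> carrier_mat (n - 1) (n - 1)"
    using similar_mat_witD2[OF A3 simB] by auto
  have "A2 * P * mat_adjoint P = A2"
    using A2 P similar_mat_witD2[OF A3 simB] by (simp add: assoc_mult_mat[OF A2 P, of _ "n - 1"])
  let ?P = "four_block_mat (1\<^sub>m 1) (0\<^sub>m 1 (n - 1)) (0\<^sub>m (n - 1) 1) P"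
  let ?C = "four_block_mat (mat 1 1 (\<lambda>_. e)) (A2 * P) (0\<^sub>m (n - 1) 1) B"
  have "similar_mat_wit (four_block_mat (mat 1 1 (\<lambda>_. e)) A2 (0\<^sub>m (n - 1) 1) A3) ?C ?P (mat_adjoint ?P)"
    unfolding mat_adjoint_four_block_diag[OF P]
    by (rule similar_mat_wit_four_block[OF similar_mat_wit_refl[OF E] simB _ _ E A3])
      (use A2 P \<open>A2 * P * mat_adjoint P = A2\<close> in auto)
  have "1 + (n - 1) = n"
    using similar_mat_witD2(5)[OF A sim] by auto
  then have "?P \<in> carrier_mat n n" using P by auto
  with similar_mat_wit_trans[OF sim \<open>similar_mat_wit _ ?C ?P _\<close>]
  have "similar_mat_wit A ?C (W * ?P) (mat_adjoint (W * ?P))"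
    using similar_mat_witD2[OF A sim] by (subst mat_adjoint_mult[of _ n n]) auto
  moreover have "upper_triangular ?C"
    by (rule upper_triangular_four_block[OF E Bc _ B]) auto
  ultimately show ?case by blast
qed

lemma proots_prod_list_linear: "proots (\<Prod>a \<leftarrow> xs. [:- a, 1:]) = mset (xs :: complex list)"
proof (induction xs)
  case (Cons a xs)
  have "proots ([:- a, 1:] * (\<Prod>a \<leftarrow> xs. [:- a, 1:])) = proots [:- a, 1:] + proots (\<Prod>a \<leftarrow> xs. [:- a, 1:])"
    by (rule proots_mult) (auto simp: prod_list_zero_iff)
  then show ?case using Cons.IH proots_linear_factor[of "- a"] by simp
qed simp

lemma normal_row_norm_eq_col_norm:
  fixes T :: "complex mat"
  assumes T: "T \<in> carrier_mat n n" and normal: "T * mat_adjoint T = mat_adjoint T * T" and i: "i < n"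
  shows "(\<Sum>j<n. (cmod (T $$ (i, j)))\<^sup>2) = (\<Sum>k<n. (cmod (T $$ (k, i)))\<^sup>2)"
proof -
  have sq: "(complex_of_real (cmod z))\<^sup>2 = z * cnj z" for z
    by (metis complex_norm_square of_real_power)
  have "complex_of_real (\<Sum>j<n. (cmod (T $$ (i, j)))\<^sup>2) = (T * mat_adjoint T) $$ (i, i)"
    using T i by (auto simp: scalar_prod_def sq lessThan_atLeast0 intro!: sum.cong)
  also have "\<dots> = (mat_adjoint T * T) $$ (i, i)" using normal by simp
  also have "\<dots> = complex_of_real (\<Sum>k<n. (cmod (T $$ (k, i)))\<^sup>2)"
    using T i by (auto simp: scalar_prod_def sq lessThan_atLeast0 mult.commute intro!: sum.cong)
  finally show ?thesis using of_real_eq_iff by blast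
qed

text \<open>By induction on the row index: once the rows above \<open>i\<close> are diagonal, column \<open>i\<close> has only
  its diagonal entry, so the equality of row and column norms kills the rest of row \<open>i\<close>.\<close>

lemma normal_upper_triangular_diagonal:
  fixes T :: "complex mat"
  assumes T: "T \<in> carrier_mat n n" and ut: "upper_triangular T"
    and normal: "T * mat_adjoint T = mat_adjoint T * T"
  shows "diagonal_mat T"
proof -
  have lower: "T $$ (i, j) = 0" if "j < i" "i < n" for i j
    using ut T that by auto
  have upper: "\<forall>j. i < j \<and> j < n \<longrightarrow> T $$ (i, j) = 0" for i
  proof (induction i rule: less_induct)
    case (less i)
    show ?case
    proof (cases "i < n")
      case i: True
      have col: "T $$ (k, i) = 0" if "k < n" "k \<noteq> i" for k
        using less[of k] lower[of i k] i that by (cases "k < i") auto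
      have "(\<Sum>j<n. (cmod (T $$ (i, j)))\<^sup>2) = (cmod (T $$ (i, i)))\<^sup>2"
        using normal_row_norm_eq_col_norm[OF T normal i] col i
        by (simp add: sum.remove[of "{..<n}" i])
      then have "(\<Sum>j\<in>{..<n} - {i}. (cmod (T $$ (i, j)))\<^sup>2) = 0"
        using i by (simp add: sum.remove[of "{..<n}" i])
      then show ?thesis by (auto simp: sum_nonneg_eq_0_iff)
    qed auto
  qed
  show ?thesis
    unfolding diagonal_mat_def using T lower upper by (metis carrier_matD linorder_neqE_nat)
qed

lemma similar_mat_wit_add:
  assumes "similar_mat_wit A B P Q" "similar_mat_wit A' B' P Q"
  shows "similar_mat_wit (A + A') (B + B') P Q"
proof -
  define n where "n = dim_row A"
  note AB = similar_mat_witD[OF n_def assms(1)]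
  note AB' = similar_mat_witD[OF refl assms(2)]
  have "dim_row A' = n" using AB(6) AB'(6) by auto
  then have B': "B' \<in> carrier_mat n n" using AB'(5) by simp
  note A'B' = AB'(3)
  have "A + A' = (P * B + P * B') * Q"
    unfolding AB(3) A'B' using AB(5-7) B' by (simp add: add_mult_distrib_mat[of _ n n])
  also have "\<dots> = P * (B + B') * Q"
    using AB(5-7) B' by (simp add: mult_add_distrib_mat[of _ n n])
  finally show ?thesis using AB(1,2,4-7) B' by (intro similar_mat_witI[of P Q n]) auto
qed

lemma similar_mat_wit_mult:
  assumes "similar_mat_wit A B P Q" "similar_mat_wit A' B' P Q"
  shows "similar_mat_wit (A * A') (B * B') P Q"
proof -
  define n where "n = dim_row A"
  note AB = similar_mat_witD[OF n_def assms(1)]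
  note AB' = similar_mat_witD[OF refl assms(2)]
  have "dim_row A' = n" using AB(6) AB'(6) by auto
  then have B': "B' \<in> carrier_mat n n" using AB'(5) by simp
  note A'B' = AB'(3)
  have "A * A' = P * B * ((Q * P) * B' * Q)"
    unfolding AB(3) A'B' using AB(5-7) B' by (simp add: assoc_mult_mat[of _ n n _ n _ n])
  also have "\<dots> = P * (B * B') * Q"
    unfolding AB(2) using AB(5-7) B' by (simp add: assoc_mult_mat[of _ n n _ n _ n])
  finally show ?thesis using AB(1,2,4-7) B' by (intro similar_mat_witI[of P Q n]) auto
qed

lemma similar_mat_wit_adjoint:
  fixes A :: "complex mat"
  assumes "similar_mat_wit A B P (mat_adjoint P)"
  shows "similar_mat_wit (mat_adjoint A) (mat_adjoint B) P (mat_adjoint P)"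
proof -
  define n where "n = dim_row A"
  note AB = similar_mat_witD[OF n_def assms]
  have "mat_adjoint A = mat_adjoint (mat_adjoint P) * mat_adjoint (P * B)"
    unfolding AB(3) using AB(5-7) by (intro mat_adjoint_mult[of _ n n]) auto
  also have "\<dots> = P * mat_adjoint B * mat_adjoint P"
    using AB(5-7) by (simp add: mat_adjoint_mult[of _ n n] assoc_mult_mat[of _ n n _ n _ n])
  finally show ?thesis using AB by (intro similar_mat_witI[of P _ n]) auto
qed

lemma similar_mat_wit_normal:
  fixes A :: "complex mat"
  assumes sim: "similar_mat_wit A B P (mat_adjoint P)" and "normal_mat A"
  shows "normal_mat B"
proof -
  note adj = similar_mat_wit_adjoint[OF sim]
  have "B * mat_adjoint B = mat_adjoint P * (A * mat_adjoint A) * P"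
    using similar_mat_wit_sym[OF similar_mat_wit_mult[OF sim adj]] unfolding similar_mat_wit_def by metis
  also have "\<dots> = mat_adjoint P * (mat_adjoint A * A) * P"
    using \<open>normal_mat A\<close> unfolding normal_mat_def by simp
  also have "\<dots> = mat_adjoint B * B"
    using similar_mat_wit_sym[OF similar_mat_wit_mult[OF adj sim]] unfolding similar_mat_wit_def by metis
  finally show ?thesis unfolding normal_mat_def .
qed

lemma normal_mat_unitary_diagonalization:
  assumes A: "A \<in> carrier_mat n n" and "normal_mat A"
  obtains D P where "similar_mat_wit A D P (mat_adjoint P)" "diagonal_mat D"
proof -
  obtain es where "char_poly A = (\<Prod>e \<leftarrow> es. [:- e, 1:])"
    using char_poly_factorized[OF A] by blast
  then obtain B P where sim: "similar_mat_wit A B P (mat_adjoint P)" and "upper_triangular B"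
    using unitary_schur_decomposition[OF A] by blast
  moreover have "B \<in> carrier_mat n n" using similar_mat_witD2[OF A sim] by simp
  moreover have "normal_mat B" using similar_mat_wit_normal[OF sim \<open>normal_mat A\<close>] .
  ultimately show thesis
    using normal_upper_triangular_diagonal that unfolding normal_mat_def by blast
qed

section \<open>The eigenvalues of \<open>H_theta \<theta> A\<close>\<close>

lemma H_theta_unitary_similar:
  assumes "similar_mat_wit A B P (mat_adjoint P)"
  shows "similar_mat_wit (H_theta t A) (H_theta t B) P (mat_adjoint P)"
  unfolding H_theta_def
  by (intro similar_mat_wit_smult similar_mat_wit_add similar_mat_wit_adjoint assms)

lemma exp_i_of_real [simp]:
  "exp (\<i> * complex_of_real t) = cis t" "exp (- (\<i> * complex_of_real t)) = cnj (cis t)"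
  by (simp_all add: cis_conv_exp exp_cnj)

lemma proots_char_poly_H_theta_diagonal:
  assumes D: "D \<in> carrier_mat n n" and "diagonal_mat D"
  shows "proots (char_poly (H_theta t D))
       = mset (map (\<lambda>k. complex_of_real (Re (cis t * D $$ (k, k)))) [0..<n])"
proof -
  have off: "D $$ (i, j) = 0" if "i < n" "j < n" "i \<noteq> j" for i j
    using \<open>diagonal_mat D\<close> D that unfolding diagonal_mat_def by auto
  have H: "H_theta t D \<in> carrier_mat n n" unfolding H_theta_def using D by auto
  have "upper_triangular (H_theta t D)"
    by (intro upper_triangularI) (use D off in \<open>auto simp: H_theta_def\<close>)
  moreover have "diag_mat (H_theta t D) = map (\<lambda>k. complex_of_real (Re (cis t * D $$ (k, k)))) [0..<n]"
    using D by (auto simp: diag_mat_def H_theta_def complex_eq_iff intro!: map_cong)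
  ultimately show ?thesis
    by (simp only: char_poly_upper_triangular[OF H] proots_prod_list_linear)
qed

lemma herm_eigs_H_theta_normal:
  assumes A: "A \<in> carrier_mat n n" and "normal_mat A"
  obtains lam :: "nat \<Rightarrow> complex"
  where "\<And>t. herm_eigs (H_theta t A) = rev (sort (map (\<lambda>k. Re (cis t * lam k)) [0..<n]))"
proof -
  obtain D P where sim: "similar_mat_wit A D P (mat_adjoint P)" and "diagonal_mat D"
    using normal_mat_unitary_diagonalization[OF assms] .
  have D: "D \<in> carrier_mat n n" using similar_mat_witD2[OF A sim] by simp
  have cp: "char_poly (H_theta t A) = char_poly (H_theta t D)" for t
    using H_theta_unitary_similar[OF sim] by (metis char_poly_similar similar_mat_def)
  have "herm_eigs (H_theta t A)
      = rev (sorted_list_of_multiset (mset (map (\<lambda>k. Re (cis t * D $$ (k, k))) [0..<n])))" for t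
    unfolding herm_eigs_def cp proots_char_poly_H_theta_diagonal[OF D \<open>diagonal_mat D\<close>]
    by (simp only: mset_map multiset.map_comp o_def Re_complex_of_real)
  then show thesis
    by (intro that[of "\<lambda>k. D $$ (k, k)"]) (simp only: sorted_list_of_multiset_mset)
qed

section \<open>Intersections of rotating half-planes\<close>

lemma inj_on_cis: "inj_on cis {0..<2 * pi}"
proof (rule inj_onI)
  fix s t assume s: "s \<in> {0..<2 * pi}" and t: "t \<in> {0..<2 * pi}" and "cis s = cis t"
  then obtain m :: int where m: "s = t + 2 * pi * m"
    using sin_cos_eq_iff[of s t] by (auto simp: complex_eq_iff)
  have "\<bar>s - t\<bar> < 2 * pi" using s t by auto
  then have "\<bar>real_of_int m\<bar> * (2 * pi) < 1 * (2 * pi)"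
    using m pi_gt_zero by (simp add: abs_mult)
  then have "m = 0" by (simp only: mult_less_cancel_right) auto
  then show "s = t" using m by simp
qed

lemma finite_Re_cis_mult_eq_0:
  assumes "d \<noteq> 0"
  shows "finite {t \<in> {0..<2 * pi}. Re (cis t * d) = 0}"
proof -
  have "{t \<in> {0..<2 * pi}. Re (cis t * d) = 0} \<subseteq> cis -` {\<i> * cmod d / d, - \<i> * cmod d / d} \<inter> {0..<2 * pi}"
  proof (intro subsetI)
    fix t assume t: "t \<in> {t \<in> {0..<2 * pi}. Re (cis t * d) = 0}"
    then have "Re (cis t * d) = 0" by simp
    define z where "z = cis t * d"
    have z: "z = \<i> * Im z" using \<open>Re (cis t * d) = 0\<close> by (simp add: z_def complex_eq_iff)
    have "\<bar>Im z\<bar> = cmod d"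
      using cmod_eq_Im[OF \<open>Re (cis t * d) = 0\<close>] by (simp add: z_def norm_mult)
    then have "Im z = cmod d \<or> Im z = - cmod d" by linarith
    then have "z = \<i> * cmod d \<or> z = - \<i> * cmod d"
      using z by auto
    then have "cis t \<in> {\<i> * cmod d / d, - \<i> * cmod d / d}"
      using assms by (auto simp: z_def field_simps)
    with t show "t \<in> cis -` {\<i> * cmod d / d, - \<i> * cmod d / d} \<inter> {0..<2 * pi}" by simp
  qed
  then show ?thesis
    by (rule finite_subset) (intro finite_vimage_IntI inj_on_cis finite.intros)
qed

lemma cis_conic_combination:
  assumes "a \<le> t" "t \<le> b" "a < b" "b - a < pi"
  obtains s u where "s \<ge> 0" "u \<ge> 0" "cis t = of_real s * cis a + of_real u * cis b"
proof
  have pos: "sin (b - a) > 0" using assms by (intro sin_gt_zero) auto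
  show "sin (b - t) / sin (b - a) \<ge> 0" "sin (t - a) / sin (b - a) \<ge> 0"
    using assms pos by (auto intro!: divide_nonneg_pos sin_ge_zero)
  have "sin (b - t) * cos a + sin (t - a) * cos b = sin (b - a) * cos t"
    "sin (b - t) * sin a + sin (t - a) * sin b = sin (b - a) * sin t"
    by (simp_all add: sin_diff cos_diff algebra_simps)
  with pos show "cis t = of_real (sin (b - t) / sin (b - a)) * cis a + of_real (sin (t - a) / sin (b - a)) * cis b"
    by (simp add: complex_eq_iff field_simps)
qed

lemma Re_cis_mult_le_0_between:
  assumes "a \<le> t" "t \<le> b" "b - a < pi" "Re (cis a * z) \<le> 0" "Re (cis b * z) \<le> 0"
  shows "Re (cis t * z) \<le> 0"
proof (cases "a < b")
  case True
  then obtain s u where "s \<ge> 0" "u \<ge> 0" "cis t = of_real s * cis a + of_real u * cis b"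
    using cis_conic_combination assms(1-3) by blast
  then have "Re (cis t * z) = s * Re (cis a * z) + u * Re (cis b * z)"
    by (simp add: algebra_simps)
  with assms \<open>s \<ge> 0\<close> \<open>u \<ge> 0\<close> show ?thesis
    by (simp add: add_nonpos_nonpos mult_nonneg_nonpos)
next
  case False
  then have "t = a" using assms(1,2) by linarith
  with assms(4) show ?thesis by simp
qed

lemma Re_cis_mult_order_persists:
  assumes "a < \<theta>" "\<theta> < b" "t \<in> {a..b}"
    and no_crossing: "\<And>s. s \<in> {a<..<b} \<Longrightarrow> Re (cis s * z) = Re (cis s * w) \<Longrightarrow> z = w"
    and "Re (cis \<theta> * z) \<ge> Re (cis \<theta> * w)"
  shows "Re (cis t * z) \<ge> Re (cis t * w)"
proof (cases "z = w")
  case False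
  define d where "d s = Re (cis s * z) - Re (cis s * w)" for s
  have "d = (\<lambda>s. (cos s * Re z - sin s * Im z) - (cos s * Re w - sin s * Im w))"
    by (simp add: d_def fun_eq_iff)
  then have cont: "continuous_on S d" for S
    by (simp only:) (intro continuous_intros)
  have d_zero: "s \<notin> {a<..<b}" if "d s = 0" for s
    using no_crossing[of s] that False unfolding d_def by auto
  have "d \<theta> > 0"
    using assms(1,2,5) d_zero[of \<theta>] unfolding d_def by force
  show ?thesis
  proof (rule ccontr)
    assume "\<not> ?thesis"
    then have "d t < 0" unfolding d_def by simp
    then obtain s where "s \<in> {min t \<theta>..max t \<theta>}" "d s = 0"
      using IVT'[of d t 0 \<theta>] IVT2'[of d t 0 \<theta>] \<open>d \<theta> > 0\<close> cont
      by (cases "t \<le> \<theta>") (force simp: min_def max_def)+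
    moreover have "s \<noteq> t" "s \<noteq> \<theta>" using \<open>d t < 0\<close> \<open>d \<theta> > 0\<close> \<open>d s = 0\<close> by auto
    ultimately show False using d_zero[of s] assms(1-3) by auto
  qed
qed simp

definition sorted_weighted_sum :: "nat \<Rightarrow> (nat \<Rightarrow> real) \<Rightarrow> (nat \<Rightarrow> real) \<Rightarrow> real" where
  "sorted_weighted_sum n c x = (\<Sum>j<n. c j * rev (sort (map x [0..<n])) ! j)"

lemma sorted_weighted_sum_eq:
  assumes "mset is = mset [0..<n]" "sorted_wrt (\<ge>) (map x is)"
  shows "sorted_weighted_sum n c x = (\<Sum>j<n. c j * x (is ! j))"
proof -
  have "sort (map x [0..<n]) = rev (map x is)"
    by (rule properties_for_sort) (use assms in \<open>simp_all add: mset_map sorted_wrt_rev\<close>)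
  moreover have "length is = n" using mset_eq_length[OF assms(1)] by simp
  ultimately show ?thesis unfolding sorted_weighted_sum_def by simp
qed

lemma sorted_weighted_sum_Re_cis_linear:
  fixes lam :: "nat \<Rightarrow> complex"
  assumes "a < b"
    and no_crossing: "\<And>s k l. s \<in> {a<..<b} \<Longrightarrow> k < n \<Longrightarrow> l < n \<Longrightarrow>
                        Re (cis s * lam k) = Re (cis s * lam l) \<Longrightarrow> lam k = lam l"
  obtains p where "\<And>t. t \<in> {a..b} \<Longrightarrow> sorted_weighted_sum n c (\<lambda>k. Re (cis t * lam k)) = Re (cis t * p)"
proof
  define \<theta> where "\<theta> = (a + b) / 2"
  define "is" where "is = sort_key (\<lambda>k. - Re (cis \<theta> * lam k)) [0..<n]"
  have mset_is: "mset is = mset [0..<n]" unfolding is_def by simp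
  then have set_is: "set is = {..<n}" using mset_eq_setD by fastforce
  have "sorted (map (\<lambda>k. - Re (cis \<theta> * lam k)) is)"
    unfolding is_def by (rule sorted_sort_key)
  then have sorted_\<theta>: "sorted_wrt (\<ge>) (map (\<lambda>k. Re (cis \<theta> * lam k)) is)"
    unfolding sorted_wrt_map by (rule sorted_wrt_mono_rel[rotated]) auto
  fix t assume t: "t \<in> {a..b}"
  have "sorted_wrt (\<ge>) (map (\<lambda>k. Re (cis t * lam k)) is)"
    using sorted_\<theta> unfolding sorted_wrt_map
  proof (rule sorted_wrt_mono_rel[rotated])
    fix k l assume "k \<in> set is" "l \<in> set is" "Re (cis \<theta> * lam k) \<ge> Re (cis \<theta> * lam l)"
    then show "Re (cis t * lam k) \<ge> Re (cis t * lam l)"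
      using Re_cis_mult_order_persists[of a \<theta> b t "lam k" "lam l"] no_crossing[of _ k l] set_is t \<open>a < b\<close>
      unfolding \<theta>_def by auto
  qed
  then have "sorted_weighted_sum n c (\<lambda>k. Re (cis t * lam k)) = (\<Sum>j<n. c j * Re (cis t * lam (is ! j)))"
    by (rule sorted_weighted_sum_eq[OF mset_is])
  also have "\<dots> = Re (cis t * (\<Sum>j<n. of_real (c j) * lam (is ! j)))"
    by (simp add: sum_distrib_left algebra_simps)
  finally show "sorted_weighted_sum n c (\<lambda>k. Re (cis t * lam k)) = Re (cis t * (\<Sum>j<n. of_real (c j) * lam (is ! j)))" .
qed

lemma cis_3pi_half: "cis (3 * pi / 2) = - \<i>"
proof -
  have "3 * pi / 2 = pi / 2 + pi" by simp
  then show ?thesis by (simp only: cis_mult[symmetric]) simp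
qed

lemma bounded_Inter_halfplanes:
  assumes "{0, pi / 2, pi, 3 * pi / 2} \<subseteq> T"
  shows "bounded (\<Inter>t\<in>T. {v. Re (cis t * v) \<le> g t})"
proof -
  have "cmod v \<le> \<bar>g 0\<bar> + \<bar>g (pi / 2)\<bar> + \<bar>g pi\<bar> + \<bar>g (3 * pi / 2)\<bar>"
    if "v \<in> (\<Inter>t\<in>T. {v. Re (cis t * v) \<le> g t})" for v
  proof -
    have h: "Re (cis t * v) \<le> g t" if "t \<in> {0, pi / 2, pi, 3 * pi / 2}" for t
      using \<open>v \<in> _\<close> assms that by blast
    have "Re v \<le> g 0" "- Im v \<le> g (pi / 2)" "- Re v \<le> g pi"
      using h[of 0] h[of "pi / 2"] h[of pi] by simp_all
    moreover have "Im v \<le> g (3 * pi / 2)"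
      using h[of "3 * pi / 2"] unfolding cis_3pi_half by simp
    ultimately show ?thesis using cmod_le[of v] by linarith
  qed
  then show ?thesis unfolding bounded_iff by blast
qed

lemma Inter_halfplanes_eq_finite_Inter:
  fixes g :: "real \<Rightarrow> real" and P :: "real set"
  assumes P: "finite P" "P \<subseteq> {0..<2 * pi}" "{0, pi / 2, pi, 3 * pi / 2} \<subseteq> P"
    and periodic: "g (2 * pi) = g 0"
    and pieces: "\<And>a b. a \<in> P \<Longrightarrow> b \<in> insert (2 * pi) P \<Longrightarrow> a < b \<Longrightarrow> {a<..<b} \<inter> P = {} \<Longrightarrow>
                   \<exists>p. \<forall>t\<in>{a..b}. g t = Re (cis t * p)"
  shows "(\<Inter>t\<in>{0..<2 * pi}. {v. Re (cis t * v) \<le> g t}) = (\<Inter>t\<in>P. {v. Re (cis t * v) \<le> g t})"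
    (is "(\<Inter>t\<in>_. ?H t) = _")
proof
  show "(\<Inter>t\<in>P. ?H t) \<subseteq> (\<Inter>t\<in>{0..<2 * pi}. ?H t)"
  proof (intro subsetI INT_I)
    fix v \<theta> assume v: "v \<in> (\<Inter>t\<in>P. ?H t)" and \<theta>: "\<theta> \<in> {0..<2 * pi}"
    show "v \<in> ?H \<theta>"
    proof (cases "\<theta> \<in> P")
      case False
      define a where "a = Max {p \<in> P. p < \<theta>}"
      define b where "b = Min (insert (2 * pi) {p \<in> P. \<theta> < p})"
      have "0 \<in> {p \<in> P. p < \<theta>}" using P(3) False \<theta> by (cases "\<theta> = 0") auto
      then have "a \<in> {p \<in> P. p < \<theta>}"
        unfolding a_def using P(1) by (intro Max_in) auto
      then have a: "a \<in> P" "a < \<theta>" "\<And>p. p \<in> P \<Longrightarrow> p < \<theta> \<Longrightarrow> p \<le> a"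
        unfolding a_def using P(1) by auto
      have "b \<in> insert (2 * pi) {p \<in> P. \<theta> < p}"
        unfolding b_def using P(1) by (intro Min_in) auto
      then have b: "b \<in> insert (2 * pi) P" "\<theta> < b" "b \<le> 2 * pi" "\<And>p. p \<in> P \<Longrightarrow> \<theta> < p \<Longrightarrow> b \<le> p"
        unfolding b_def using P(1) \<theta> by auto
      have not_in: "p \<notin> P" if "a < p" "p < b" for p
        using a(3)[of p] b(4)[of p] False that by (cases p \<theta> rule: linorder_cases) auto
      then have gap: "{a<..<b} \<inter> P = {}" by auto
      have "b - a < pi"
      proof -
        have q: "q \<le> a \<or> b \<le> q" if "q \<in> P" for q
          using not_in[of q] that by fastforce
        have "0 \<le> a" using a(1) P(2) by auto
        with q[of "pi / 2"] q[of pi] q[of "3 * pi / 2"] P(3) a(2) b(2,3) show ?thesis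
          using pi_gt_zero by auto
      qed
      obtain p where p: "\<And>t. t \<in> {a..b} \<Longrightarrow> g t = Re (cis t * p)"
        using pieces[OF a(1) b(1) _ gap] a(2) b(2) by force
      have "v \<in> ?H a" using v a(1) by blast
      moreover have "v \<in> ?H b"
      proof (cases "b = 2 * pi")
        case True
        then show ?thesis using v P(3) periodic by auto
      qed (use b(1) v in auto)
      ultimately have "Re (cis a * (v - p)) \<le> 0" "Re (cis b * (v - p)) \<le> 0"
        using p[of a] p[of b] a(2) b(2) by (simp_all add: algebra_simps)
      then have "Re (cis \<theta> * (v - p)) \<le> 0"
        using Re_cis_mult_le_0_between[of a \<theta> b "v - p"] a(2) b(2) \<open>b - a < pi\<close> by linarith
      then show ?thesis using p[of \<theta>] a(2) b(2) by (simp add: algebra_simps)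
    qed (use v in blast)
  qed
qed (use P(2) in auto)

definition crossing_angles :: "nat \<Rightarrow> (nat \<Rightarrow> complex) \<Rightarrow> real set" where
  "crossing_angles n lam = {t \<in> {0..<2 * pi}.
     \<exists>k<n. \<exists>l<n. lam k \<noteq> lam l \<and> Re (cis t * lam k) = Re (cis t * lam l)}"

lemma finite_crossing_angles: "finite (crossing_angles n lam)"
proof -
  define D where "D = {lam k - lam l | k l. k < n \<and> l < n \<and> lam k \<noteq> lam l}"
  have "crossing_angles n lam \<subseteq> (\<Union>d\<in>D. {t \<in> {0..<2 * pi}. Re (cis t * d) = 0})"
  proof (intro subsetI)
    fix t assume "t \<in> crossing_angles n lam"
    then obtain k l where "t \<in> {0..<2 * pi}" "k < n" "l < n" "lam k \<noteq> lam l"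
      "Re (cis t * lam k) = Re (cis t * lam l)"
      unfolding crossing_angles_def by blast
    then show "t \<in> (\<Union>d\<in>D. {t \<in> {0..<2 * pi}. Re (cis t * d) = 0})"
      unfolding D_def by (intro UN_I[of "lam k - lam l"]) (auto simp: right_diff_distrib)
  qed
  moreover have "finite (\<Union>d\<in>D. {t \<in> {0..<2 * pi}. Re (cis t * d) = 0})"
  proof (rule finite_UN_I)
    have "D \<subseteq> (\<lambda>(k, l). lam k - lam l) ` ({..<n} \<times> {..<n})" unfolding D_def by auto
    then show "finite D" by (rule finite_subset) simp
  next
    fix d assume "d \<in> D"
    then have "d \<noteq> 0" unfolding D_def by auto
    then show "finite {t \<in> {0..<2 * pi}. Re (cis t * d) = 0}" by (rule finite_Re_cis_mult_eq_0)
  qed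
  ultimately show ?thesis by (rule finite_subset)
qed

theorem Inter_halfplanes_sorted_weighted_sum_finite:
  fixes lam :: "nat \<Rightarrow> complex" and c :: "nat \<Rightarrow> real"
  shows "\<exists>F :: (complex \<times> real) set. finite F \<and> (\<forall>(a, b)\<in>F. a \<noteq> 0) \<and>
    (\<Inter>t\<in>{0..<2 * pi}. {v. Re (cis t * v) \<le> sorted_weighted_sum n c (\<lambda>k. Re (cis t * lam k))})
      = (\<Inter>(a, b)\<in>F. closed_halfplane a b)"
proof -
  define g where "g t = sorted_weighted_sum n c (\<lambda>k. Re (cis t * lam k))" for t
  define P where "P = {0, pi / 2, pi, 3 * pi / 2} \<union> crossing_angles n lam"
  have "crossing_angles n lam \<subseteq> {0..<2 * pi}" unfolding crossing_angles_def by blast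
  then have P: "finite P" "P \<subseteq> {0..<2 * pi}" "{0, pi / 2, pi, 3 * pi / 2} \<subseteq> P"
    using pi_gt_zero by (simp_all add: P_def finite_crossing_angles)
  have pieces: "\<exists>p. \<forall>t\<in>{a..b}. g t = Re (cis t * p)"
    if "a \<in> P" "b \<in> insert (2 * pi) P" "a < b" "{a<..<b} \<inter> P = {}" for a b
  proof -
    have "lam k = lam l"
      if "s \<in> {a<..<b}" "k < n" "l < n" "Re (cis s * lam k) = Re (cis s * lam l)" for s k l
    proof -
      have "0 \<le> a" "b \<le> 2 * pi" using \<open>a \<in> P\<close> \<open>b \<in> insert (2 * pi) P\<close> P(2) by auto
      then have "s \<in> {0..<2 * pi}" using that(1) by simp
      moreover have "s \<notin> P" using \<open>{a<..<b} \<inter> P = {}\<close> that(1) by blast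
      ultimately have "s \<in> {0..<2 * pi}" "s \<notin> crossing_angles n lam" by (simp_all add: P_def)
      then show ?thesis using that(2-4) unfolding crossing_angles_def by blast
    qed
    then obtain p where "\<And>t. t \<in> {a..b} \<Longrightarrow> g t = Re (cis t * p)"
      using sorted_weighted_sum_Re_cis_linear[OF \<open>a < b\<close>] unfolding g_def by metis
    then show ?thesis by blast
  qed
  have "g (2 * pi) = g 0" by (simp add: g_def)
  define F where "F = (\<lambda>t. (cnj (cis t), g t)) ` P"
  have "(\<Inter>t\<in>{0..<2 * pi}. {v. Re (cis t * v) \<le> g t}) = (\<Inter>t\<in>P. {v. Re (cis t * v) \<le> g t})"
    by (rule Inter_halfplanes_eq_finite_Inter[OF P \<open>g (2 * pi) = g 0\<close> pieces])
  also have "\<dots> = (\<Inter>(a, b)\<in>F. closed_halfplane a b)"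
    unfolding F_def closed_halfplane_def by simp
  finally have "(\<Inter>t\<in>{0..<2 * pi}. {v. Re (cis t * v) \<le> g t}) = (\<Inter>(a, b)\<in>F. closed_halfplane a b)" .
  moreover have "finite F" "\<forall>(a, b)\<in>F. a \<noteq> 0" unfolding F_def using P(1) by auto
  ultimately show ?thesis unfolding g_def by blast
qed

theorem mainTheorem3:
  fixes A :: "complex mat" and n :: nat and c :: "nat \<Rightarrow> real"
  assumes "A \<in> carrier_mat n n"
    and "normal_mat A"
  shows "(\<exists>F :: (complex \<times> real) set. finite F \<and> (\<forall>(a, b)\<in>F. a \<noteq> 0) \<and>
           weighted_nr n A c = (\<Inter>(a, b)\<in>F. closed_halfplane a b))
         \<and> bounded (weighted_nr n A c)"
proof -
  obtain lam where lam: "\<And>t. herm_eigs (H_theta t A) = rev (sort (map (\<lambda>k. Re (cis t * lam k)) [0..<n]))"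
    using herm_eigs_H_theta_normal[OF assms] by metis
  have eig_sum: "(\<Sum>j<n. c j * herm_eig (H_theta t A) j) = sorted_weighted_sum n c (\<lambda>k. Re (cis t * lam k))" for t
    unfolding herm_eig_def lam sorted_weighted_sum_def ..
  have W: "weighted_nr n A c
      = (\<Inter>t\<in>{0..<2 * pi}. {v. Re (cis t * v) \<le> sorted_weighted_sum n c (\<lambda>k. Re (cis t * lam k))})"
    unfolding weighted_nr_def exp_i_of_real eig_sum ..
  show ?thesis
    unfolding W
  proof
    show "bounded (\<Inter>t\<in>{0..<2 * pi}. {v. Re (cis t * v) \<le> sorted_weighted_sum n c (\<lambda>k. Re (cis t * lam k))})"
      by (rule bounded_Inter_halfplanes) (use pi_gt_zero in auto)
  qed (rule Inter_halfplanes_sorted_weighted_sum_finite)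
qed

end
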